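(* Let $(a_n)_{\mathrm c}\in\widetilde{\mathbb C}_{\mathrm c}$ and $c\in\widetilde{\mathbb C}$. Then there exists $q\in\mathbb N$ such that $B_{\mathrm d\rho^q}(c)\subseteq S((a_n)_{\mathrm c},c)$.
   Context: Fix $I=(0,1]$ and a gauge $\rho=(\rho_\varepsilon)_{\varepsilon\in I}$ with $\rho_\varepsilon\in I$ and $\rho_\varepsilon\to0$ as $\varepsilon\to0$. "$\forall^0\varepsilon$" means "for all sufficiently small $\varepsilon\in I$". A net $(x_\varepsilon)\in\mathbb C^I$ is $\rho$-moderate ($(x_\varepsilon)\in\mathbb C_\rho$) if $\exists N\in\mathbb N\,\forall^0\varepsilon:|x_\varepsilon|\le\rho_\varepsilon^{-N}$, and $\rho$-negligible if $\forall q\in\mathbb N\,\forall^0\varepsilon:|x_\varepsilon|\le\rho_\varepsilon^q$. $\widetilde{\mathbb C}:=\mathbb C_\rho/\{\text{negligible nets}\}$ with classes $[x_\varepsilon]$; $\widetilde{\mathbb R}\subseteq\widetilde{\mathbb C}$ consists of classes of real moderate nets; $\mathrm d\rho:=[\rho_\varepsilon]$, $|[z_\varepsilon]|:=[|z_\varepsilon|]$. On $\widetilde{\mathbb R}$: $[x_\varepsilon]\le[y_\varepsilon]$ iff $x_\varepsilon\le y_\varepsilon+z_\varepsilon$ $\forall^0\varepsilon$ for some negligible $(z_\varepsilon)$; $x<y$ iff $\exists m\,\forall^0\varepsilon:y_\varepsilon-x_\varepsilon>\rho_\varepsilon^m$; $\widetilde{\mathbb R}_{>0}:=\{x:x>0\}$.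 $B_r(c):=\{z\in\widetilde{\mathbb C}:|z-c|<r\}$ for $r\in\widetilde{\mathbb R}_{>0}$ (these balls generate the sharp topology). Hypernatural numbers: $\widetilde{\mathbb N}:=\{[n_\varepsilon]\in\widetilde{\mathbb R}:n_\varepsilon\in\mathbb N\ \forall\varepsilon\}$; for each $N\in\widetilde{\mathbb N}$ a representative $(\mathrm{ni}(N)_\varepsilon)$ with all $\mathrm{ni}(N)_\varepsilon\in\mathbb N$ is fixed. Hyperlimit: $l=\lim_{n\in\widetilde{\mathbb N}}a_n$ means $\forall q\,\exists M\in\widetilde{\mathbb N}\,\forall n\in\widetilde{\mathbb N}:n\ge M\Rightarrow|a_n-l|<\mathrm d\rho^q$. Hyperseries: a net $(a_{n\varepsilon})_{n\in\mathbb N,\varepsilon\in I}$ is moderate over hypersums if for every $N\in\widetilde{\mathbb N}$ the net $(\sum_{n=0}^{\mathrm{ni}(N)_\varepsilon}a_{n\varepsilon})_\varepsilon$ is $\rho$-moderate; two such nets are equivalent if for all $N,M\in\widetilde{\mathbb N}$ the net $(\sum_{n=\mathrm{ni}(N)_\varepsilon}^{\mathrm{ni}(M)_\varepsilon}(a_{n\varepsilon}-\bar a_{n\varepsilon}))_\varepsilon$ is negligible; the quotient is $\widetilde{\mathbb C}_{\mathrm s}$ with classes $[a_{n\varepsilon}]_{\mathrm s}$. $\sum_{n=N}^Ma_n:=[\sum_{n=\mathrm{ni}(N)_\varepsilon}^{\mathrm{ni}(M)_\varepsilon}a_{n\varepsilon}]$, and $\sum_{n\in\widetilde{\mathbb N}}a_n:=\lim_{N\in\widetilde{\mathbb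 N}}\sum_{n=0}^Na_n$ when this hyperlimit exists (convergence). Coefficients: $\widetilde{\mathbb C}_{\mathrm c}$ is the set of weakly $\rho$-moderate nets $(a_{n\varepsilon})$ ($\exists Q,R\in\mathbb N\,\forall^0\varepsilon\,\forall n\in\mathbb N:|a_{n\varepsilon}|\le\rho_\varepsilon^{-nQ-R}$) modulo strong equivalence ($\forall q,r\,\forall^0\varepsilon\,\forall n:|a_{n\varepsilon}-\bar a_{n\varepsilon}|\le\rho_\varepsilon^{nq+r}$), classes $(a_n)_{\mathrm c}=[a_{n\varepsilon}]_{\mathrm c}$. $\widetilde{\mathbb R}_\infty:=(\mathbb R\cup\{\pm\infty\})^I/\sim_\rho$ (same negligibility relation), ordered by $x\le y$ iff some representatives satisfy $x_\varepsilon\le y_\varepsilon$ $\forall^0\varepsilon$, and for $x\in\widetilde{\mathbb R}$, $x<y$ iff $\exists m\,\forall^0\varepsilon:y_\varepsilon>x_\varepsilon+\rho_\varepsilon^m$. Radius: $\mathrm{rad}(a_n)_{\mathrm c}:=[(\limsup_n|a_{n\varepsilon}|^{1/n})^{-1}]\in\widetilde{\mathbb R}_\infty$. Set of convergence: $S((a_n)_{\mathrm c},c)$ is the set of $z\in\widetilde{\mathbb C}$ with $|z-c|<\mathrm{rad}(a_n)_{\mathrm c}$ for which there exist representatives $z=[z_\varepsilon]$, $c=[c_\varepsilon]$, $(a_n)_{\mathrm c}=[a_{n\varepsilon}]_{\mathrm c}$ such that: (a) the net $(a_{n\varepsilon}(z_\varepsilon-c_\varepsilon)^n)_{n,\varepsilon}$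 is moderate over hypersums (its class $(a_n(z-c)^n)_n\in\widetilde{\mathbb C}_{\mathrm s}$ is called a formal hyperpower series); (b) the hyperseries $\sum_{n\in\widetilde{\mathbb N}}a_n(z-c)^n$ converges and equals $[\sum_{n=0}^{\infty}a_{n\varepsilon}(z_\varepsilon-c_\varepsilon)^n]$ (these ordinary series converging for small $\varepsilon$ to a moderate net); (c) for every representative $z=[\hat z_\varepsilon]$, the net $(\sum_{n\ge1}na_{n\varepsilon}(\hat z_\varepsilon-c_\varepsilon)^{n-1})_\varepsilon$ (derivative of the $\varepsilon$-wise power series at $\hat z_\varepsilon$) is $\rho$-moderate. *)

theory Defs
  imports Complex_Main "HOL-Library.Extended_Real" "HOL-Library.Liminf_Limsup"
begin

(* Nets indexed by eps in I = (0,1] are functions real => _ ; only small eps matter.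
   "for all sufficiently small eps" is rendered as eventually at_right 0. *)

definition rho_gauge :: "(real \<Rightarrow> real) \<Rightarrow> bool" where
  "rho_gauge \<rho> \<longleftrightarrow> (\<forall>e\<in>{0<..1}. \<rho> e \<in> {0<..1}) \<and> (\<rho> \<longlongrightarrow> 0) (at_right 0)"

definition rmod :: "(real \<Rightarrow> real) \<Rightarrow> (real \<Rightarrow> 'a::real_normed_vector) \<Rightarrow> bool" where
  "rmod \<rho> x \<longleftrightarrow> (\<exists>N::nat. \<forall>\<^sub>F e in at_right 0. norm (x e) \<le> inverse (\<rho> e ^ N))"

definition rneg :: "(real \<Rightarrow> real) \<Rightarrow> (real \<Rightarrow> 'a::real_normed_vector) \<Rightarrow> bool" where
  "rneg \<rho> x \<longleftrightarrow> (\<forall>q::nat. \<forall>\<^sub>F e in at_right 0. norm (x e) \<le> \<rho> e ^ q)"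

definition req :: "(real \<Rightarrow> real) \<Rightarrow> (real \<Rightarrow> 'a::real_normed_vector) \<Rightarrow> (real \<Rightarrow> 'a) \<Rightarrow> bool" where
  "req \<rho> x y \<longleftrightarrow> rneg \<rho> (\<lambda>e. x e - y e)"

definition rle :: "(real \<Rightarrow> real) \<Rightarrow> (real \<Rightarrow> real) \<Rightarrow> (real \<Rightarrow> real) \<Rightarrow> bool" where
  "rle \<rho> x y \<longleftrightarrow> (\<exists>w. rneg \<rho> w \<and> (\<forall>\<^sub>F e in at_right 0. x e \<le> y e + w e))"

definition rlt :: "(real \<Rightarrow> real) \<Rightarrow> (real \<Rightarrow> real) \<Rightarrow> (real \<Rightarrow> real) \<Rightarrow> bool" where
  "rlt \<rho> x y \<longleftrightarrow> (\<exists>m::nat. \<forall>\<^sub>F e in at_right 0. y e - x e > \<rho> e ^ m)"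

(* strict order x < y for x in R~ and y in R~_infinity *)
definition rlt_ext :: "(real \<Rightarrow> real) \<Rightarrow> (real \<Rightarrow> real) \<Rightarrow> (real \<Rightarrow> ereal) \<Rightarrow> bool" where
  "rlt_ext \<rho> x y \<longleftrightarrow> (\<exists>m::nat. \<forall>\<^sub>F e in at_right 0. y e > ereal (x e + \<rho> e ^ m))"

(* a natural-valued net representing a hypernatural number *)
definition hypernat :: "(real \<Rightarrow> real) \<Rightarrow> (real \<Rightarrow> nat) \<Rightarrow> bool" where
  "hypernat \<rho> N \<longleftrightarrow> rmod \<rho> (\<lambda>e. real (N e))"

(* hyperlimit of a map from hypernaturals (given by natural-valued representatives) *)
definition hyperlim :: "(real \<Rightarrow> real) \<Rightarrow> ((real \<Rightarrow> nat) \<Rightarrow> real \<Rightarrow> complex) \<Rightarrow> (real \<Rightarrow> complex) \<Rightarrow> bool" where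
  "hyperlim \<rho> s l \<longleftrightarrow> (\<forall>q::nat. \<exists>M. hypernat \<rho> M \<and>
      (\<forall>N. hypernat \<rho> N \<and> rle \<rho> (\<lambda>e. real (M e)) (\<lambda>e. real (N e)) \<longrightarrow>
           rlt \<rho> (\<lambda>e. cmod (s N e - l e)) (\<lambda>e. \<rho> e ^ q)))"

definition hypersum :: "(nat \<Rightarrow> real \<Rightarrow> complex) \<Rightarrow> (real \<Rightarrow> nat) \<Rightarrow> real \<Rightarrow> complex" where
  "hypersum b N = (\<lambda>e. \<Sum>n\<le>N e. b n e)"

definition hypersum_moderate :: "(real \<Rightarrow> real) \<Rightarrow> (nat \<Rightarrow> real \<Rightarrow> complex) \<Rightarrow> bool" where
  "hypersum_moderate \<rho> b \<longleftrightarrow> (\<forall>N. hypernat \<rho> N \<longrightarrow> rmod \<rho> (hypersum b N))"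

definition weakly_moderate :: "(real \<Rightarrow> real) \<Rightarrow> (nat \<Rightarrow> real \<Rightarrow> complex) \<Rightarrow> bool" where
  "weakly_moderate \<rho> a \<longleftrightarrow> (\<exists>Q R::nat. \<forall>\<^sub>F e in at_right 0. \<forall>n.
      cmod (a n e) \<le> inverse (\<rho> e ^ (n * Q + R)))"

definition strong_eq :: "(real \<Rightarrow> real) \<Rightarrow> (nat \<Rightarrow> real \<Rightarrow> complex) \<Rightarrow> (nat \<Rightarrow> real \<Rightarrow> complex) \<Rightarrow> bool" where
  "strong_eq \<rho> a b \<longleftrightarrow> (\<forall>q r::nat. \<forall>\<^sub>F e in at_right 0. \<forall>n.
      cmod (a n e - b n e) \<le> \<rho> e ^ (n * q + r))"

definition rad :: "(nat \<Rightarrow> real \<Rightarrow> complex) \<Rightarrow> real \<Rightarrow> ereal" where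
  "rad a = (\<lambda>e. inverse (limsup (\<lambda>n. ereal (root n (cmod (a n e))))))"

(* set of convergence S((a_n)_c, c), as a set of representatives *)
definition conv_set :: "(real \<Rightarrow> real) \<Rightarrow> (nat \<Rightarrow> real \<Rightarrow> complex) \<Rightarrow> (real \<Rightarrow> complex) \<Rightarrow> (real \<Rightarrow> complex) set" where
  "conv_set \<rho> a c = {z. rmod \<rho> z \<and> rlt_ext \<rho> (\<lambda>e. cmod (z e - c e)) (rad a) \<and>
     (\<exists>z' c' a'. rmod \<rho> z' \<and> req \<rho> z' z \<and> rmod \<rho> c' \<and> req \<rho> c' c \<and>
        weakly_moderate \<rho> a' \<and> strong_eq \<rho> a' a \<and>
        hypersum_moderate \<rho> (\<lambda>n e. a' n e * (z' e - c' e) ^ n) \<and>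
        (\<forall>\<^sub>F e in at_right 0. summable (\<lambda>n. a' n e * (z' e - c' e) ^ n)) \<and>
        rmod \<rho> (\<lambda>e. \<Sum>n. a' n e * (z' e - c' e) ^ n) \<and>
        hyperlim \<rho> (hypersum (\<lambda>n e. a' n e * (z' e - c' e) ^ n))
                   (\<lambda>e. \<Sum>n. a' n e * (z' e - c' e) ^ n) \<and>
        (\<forall>zh. rmod \<rho> zh \<and> req \<rho> zh z \<longrightarrow>
           (\<forall>\<^sub>F e in at_right 0. summable (\<lambda>n. of_nat (Suc n) * a' (Suc n) e * (zh e - c' e) ^ n)) \<and>
           rmod \<rho> (\<lambda>e. \<Sum>n. of_nat (Suc n) * a' (Suc n) e * (zh e - c' e) ^ n)))}"

(* sharp ball B_r(c), as a set of representatives *)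
definition sball :: "(real \<Rightarrow> real) \<Rightarrow> (real \<Rightarrow> real) \<Rightarrow> (real \<Rightarrow> complex) \<Rightarrow> (real \<Rightarrow> complex) set" where
  "sball \<rho> r c = {z. rmod \<rho> z \<and> rlt \<rho> (\<lambda>e. cmod (z e - c e)) r}"

end

theory Submission
  imports Defs
begin

text \<open>
  For small \<open>\<epsilon>\<close> we have \<open>\<rho>\<^sub>\<epsilon> \<le> 1/2\<close> and \<open>|a\<^sub>n\<^sub>\<epsilon>| \<le> \<rho>\<^sub>\<epsilon>^(-nQ-R)\<close>.
  If \<open>|z - c| < \<rho>\<^sub>\<epsilon>^q\<close> with \<open>q = Q + R + 3\<close>, the terms \<open>a\<^sub>n\<^sub>\<epsilon> (z - c)^n\<close> are
  dominated by the geometric sequence \<open>\<rho>\<^sub>\<epsilon>^(-R) \<rho>\<^sub>\<epsilon>^n\<close>. This gives convergence, moderate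
  partial and total sums, and the tail bound \<open>\<rho>\<^sub>\<epsilon>^(-R) \<rho>\<^sub>\<epsilon>^N\<close>, which makes the
  hyperseries converge. The factor \<open>n + 1 \<le> 2^n\<close> of the derivative series is absorbed in the
  same way for every representative of \<open>z\<close>, since all of them lie within \<open>\<rho>\<^sub>\<epsilon>^(Q+2)\<close>
  of \<open>c\<close>; and the coefficient bound gives \<open>rad(a) \<ge> \<rho>\<^sub>\<epsilon>^(Q+R) > |z - c|\<close>. All
  representatives required in the definition of the set of convergence can be taken to be the
  given ones.
\<close>

lemma two_mult_power_Suc_le:
  fixes r :: real assumes "0 \<le> r" "r \<le> 1/2"
  shows "2 * r ^ Suc k \<le> r ^ k"
proof -
  have "2 * r ^ Suc k = r ^ k * (2 * r)" by (simp add: mult_ac)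
  also have "\<dots> \<le> r ^ k" using assms by (simp add: mult_left_le)
  finally show ?thesis .
qed

lemma two_mult_inverse_power_le:
  fixes r :: real assumes "0 < r" "r \<le> 1/2"
  shows "2 * inverse (r ^ k) \<le> inverse (r ^ Suc k)"
  using two_mult_power_Suc_le[of r k] assms by (simp add: field_simps)

lemma of_nat_Suc_mult_power_le_one:
  fixes r :: real assumes "0 \<le> r" "r \<le> 1/2"
  shows "real (Suc n) * r ^ n \<le> 1"
proof -
  have "real (Suc n) \<le> 2 ^ n"
    using less_exp[of n] by (metis Suc_leI of_nat_le_iff of_nat_numeral of_nat_power)
  moreover have "r ^ n \<le> (1/2) ^ n" using assms by (intro power_mono) auto
  ultimately have "real (Suc n) * r ^ n \<le> 2 ^ n * (1/2) ^ n"
    using assms by (intro mult_mono) auto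
  then show ?thesis by (simp add: power_mult_distrib[symmetric])
qed

lemma geometric_majorant_bounds:
  fixes f :: "nat \<Rightarrow> 'a::banach" and r C :: real
  assumes r: "0 < r" "r \<le> 1/2" and f: "\<And>n. norm (f n) \<le> C * r ^ n"
  shows "summable f" and "norm (suminf f) \<le> 2 * C" and "norm (\<Sum>n\<le>N. f n) \<le> 2 * C"
    and "norm (suminf f - (\<Sum>n\<le>N. f n)) \<le> C * r ^ N"
proof -
  have C: "0 \<le> C" using order_trans[OF norm_ge_zero f[of 0]] by simp
  have geom: "(\<lambda>n. D * r ^ n) sums (D / (1 - r))" for D
    using sums_mult[OF geometric_sums, of r D] r by simp
  have half: "D / (1 - r) \<le> 2 * D" if "0 \<le> D" for D
    using r that by (simp add: field_simps) (use mult_left_mono[of "2 * r" 1 D] in linarith)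
  show sf: "summable f"
    using summable_comparison_test'[OF sums_summable[OF geom] f] .
  show "norm (suminf f) \<le> 2 * C"
    using norm_suminf_le[OF f sums_summable[OF geom]] sums_unique[OF geom] half[OF C] by simp
  have "norm (\<Sum>n\<le>N. f n) \<le> (\<Sum>n\<le>N. C * r ^ n)"
    by (rule order.trans[OF norm_sum sum_mono[OF f]])
  also have "\<dots> \<le> C / (1 - r)"
    using sum_le_suminf[OF sums_summable[OF geom], of "{..N}"] sums_unique[OF geom] r C by simp
  finally show "norm (\<Sum>n\<le>N. f n) \<le> 2 * C" using half[OF C] by simp
  have "suminf f - (\<Sum>n\<le>N. f n) = (\<Sum>n. f (n + Suc N))"
    using suminf_split_initial_segment[OF sf, of "Suc N"] by (simp add: lessThan_Suc_atMost)
  also have "norm \<dots> \<le> C * r ^ Suc N / (1 - r)"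
  proof -
    have "norm (f (n + Suc N)) \<le> C * r ^ Suc N * r ^ n" for n
      using f[of "n + Suc N"] by (simp add: power_add mult_ac)
    from norm_suminf_le[OF this sums_summable[OF geom]] show ?thesis
      by (simp add: sums_unique[OF geom])
  qed
  also have "\<dots> \<le> 2 * (C * r ^ Suc N)" using half C r by simp
  also have "\<dots> = C * (2 * r ^ Suc N)" by simp
  also have "\<dots> \<le> C * r ^ N"
    using two_mult_power_Suc_le[of r N] r C by (intro mult_left_mono) auto
  finally show "norm (suminf f - (\<Sum>n\<le>N. f n)) \<le> C * r ^ N" .
qed

lemma norm_term_le_geometric:
  fixes r :: real and a :: "nat \<Rightarrow> 'a::real_normed_field"
  assumes r: "0 < r" "r \<le> 1" and a: "\<And>n. norm (a n) \<le> inverse (r ^ (n * Q + R))"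
    and x: "norm x \<le> r ^ Suc Q"
  shows "norm (a n * x ^ n) \<le> inverse (r ^ R) * r ^ n"
proof -
  have "norm (a n * x ^ n) \<le> inverse (r ^ (n * Q + R)) * (r ^ Suc Q) ^ n"
    unfolding norm_mult norm_power using a[of n] x r by (intro mult_mono power_mono) auto
  also have "\<dots> = inverse (r ^ R) * r ^ n"
    using r by (simp add: power_add power_mult field_simps mult.commute)
  finally show ?thesis .
qed

lemma norm_deriv_term_le_geometric:
  fixes r :: real and a :: "nat \<Rightarrow> 'a::real_normed_field"
  assumes r: "0 < r" "r \<le> 1/2" and a: "\<And>n. norm (a n) \<le> inverse (r ^ (n * Q + R))"
    and x: "norm x \<le> r ^ (Q + 2)"
  shows "norm (of_nat (Suc n) * a (Suc n) * x ^ n) \<le> inverse (r ^ (Q + R)) * r ^ n"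
proof -
  have "norm (of_nat (Suc n) * a (Suc n) * x ^ n)
      \<le> real (Suc n) * inverse (r ^ (Suc n * Q + R)) * (r ^ (Q + 2)) ^ n"
    unfolding norm_mult norm_power norm_of_nat
    using a[of "Suc n"] x r by (intro mult_mono power_mono mult_left_mono) auto
  also have "\<dots> = inverse (r ^ (Q + R)) * r ^ n * (real (Suc n) * r ^ n)"
    using r by (simp add: power_add power_mult field_simps mult.commute)
  also have "\<dots> \<le> inverse (r ^ (Q + R)) * r ^ n"
    using r of_nat_Suc_mult_power_le_one[of r n] by (simp add: mult_left_le)
  finally show ?thesis .
qed

lemma power_series_bounds:
  fixes r :: real and a :: "nat \<Rightarrow> 'a::{real_normed_field,banach}"
  assumes r: "0 < r" "r \<le> 1/2" and a: "\<And>n. norm (a n) \<le> inverse (r ^ (n * Q + R))"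
    and x: "norm x \<le> r ^ Suc Q"
  shows "summable (\<lambda>n. a n * x ^ n)"
    and "norm (\<Sum>n. a n * x ^ n) \<le> inverse (r ^ Suc R)"
    and "norm (\<Sum>n\<le>N. a n * x ^ n) \<le> inverse (r ^ Suc R)"
    and "norm ((\<Sum>n. a n * x ^ n) - (\<Sum>n\<le>N. a n * x ^ n)) \<le> inverse (r ^ R) * r ^ N"
proof -
  have "r \<le> 1" using r by simp
  note geometric = geometric_majorant_bounds[OF r norm_term_le_geometric[OF r(1) this a x]]
  note double = two_mult_inverse_power_le[OF r, of R]
  show "summable (\<lambda>n. a n * x ^ n)"
    by (rule geometric(1))
  show "norm (\<Sum>n. a n * x ^ n) \<le> inverse (r ^ Suc R)"
    using geometric(2) double by linarith
  show "norm (\<Sum>n\<le>N. a n * x ^ n) \<le> inverse (r ^ Suc R)"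
    using geometric(3)[of N] double by linarith
  show "norm ((\<Sum>n. a n * x ^ n) - (\<Sum>n\<le>N. a n * x ^ n)) \<le> inverse (r ^ R) * r ^ N"
    by (rule geometric(4))
qed

lemma deriv_power_series_bounds:
  fixes r :: real and a :: "nat \<Rightarrow> 'a::{real_normed_field,banach}"
  assumes r: "0 < r" "r \<le> 1/2" and a: "\<And>n. norm (a n) \<le> inverse (r ^ (n * Q + R))"
    and x: "norm x \<le> r ^ (Q + 2)"
  shows "summable (\<lambda>n. of_nat (Suc n) * a (Suc n) * x ^ n)"
    and "norm (\<Sum>n. of_nat (Suc n) * a (Suc n) * x ^ n) \<le> inverse (r ^ Suc (Q + R))"
proof -
  note geometric = geometric_majorant_bounds[OF r norm_deriv_term_le_geometric[OF r a x]]
  show "summable (\<lambda>n. of_nat (Suc n) * a (Suc n) * x ^ n)"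
    by (rule geometric(1))
  show "norm (\<Sum>n. of_nat (Suc n) * a (Suc n) * x ^ n) \<le> inverse (r ^ Suc (Q + R))"
    using geometric(2) two_mult_inverse_power_le[OF r, of "Q + R"] by linarith
qed

lemma inverse_limsup_root_ge:
  fixes r :: real and a :: "nat \<Rightarrow> 'a::real_normed_vector"
  assumes r: "0 < r" "r \<le> 1" and a: "\<And>n. norm (a n) \<le> inverse (r ^ (n * Q + R))"
  shows "ereal (r ^ (Q + R)) \<le> inverse (limsup (\<lambda>n. ereal (root n (norm (a n)))))"
proof -
  let ?L = "limsup (\<lambda>n. ereal (root n (norm (a n))))"
  have root_le: "root n (norm (a n)) \<le> inverse (r ^ (Q + R))" for n
  proof (cases n)
    case 0 then show ?thesis using r by simp
  next
    case (Suc m)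
    have "norm (a n) \<le> inverse (r ^ (n * Q + R))" by (rule a)
    also have "\<dots> \<le> inverse (r ^ (n * (Q + R)))"
      using r Suc by (intro le_imp_inverse_le power_decreasing) (auto simp: algebra_simps)
    also have "\<dots> = inverse (r ^ (Q + R)) ^ n" by (metis power_mult mult.commute power_inverse)
    finally have "root n (norm (a n)) \<le> root n (inverse (r ^ (Q + R)) ^ n)"
      using Suc by (intro real_root_le_mono) auto
    also have "\<dots> = inverse (r ^ (Q + R))" using Suc r by (intro real_root_power_cancel) auto
    finally show ?thesis .
  qed
  have "?L \<le> ereal (inverse (r ^ (Q + R)))"
    by (rule Limsup_bounded) (use root_le in auto)
  moreover have "0 \<le> ?L"
    by (rule le_Limsup) (auto intro!: always_eventually real_root_ge_zero)
  ultimately show ?thesis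
    using r ereal_inverse_antimono[of ?L "ereal (inverse (r ^ (Q + R)))"]
    by (cases "?L = 0") auto
qed

lemma rho_gauge_eventually_small:
  assumes "rho_gauge \<rho>"
  shows "\<forall>\<^sub>F e in at_right 0. 0 < \<rho> e \<and> \<rho> e \<le> 1/2"
proof -
  have "\<forall>\<^sub>F e in at_right (0::real). e \<in> {0<..1}"
    unfolding eventually_at_right_field by (auto intro!: exI[of _ 1])
  moreover have "(\<rho> \<longlongrightarrow> 0) (at_right 0)"
    using assms unfolding rho_gauge_def by blast
  then have "\<forall>\<^sub>F e in at_right 0. \<rho> e < 1/2"
    by (rule order_tendstoD(2)) simp
  ultimately show ?thesis
  proof eventually_elim
    case (elim e)
    then show ?case using assms unfolding rho_gauge_def by auto
  qed
qed

lemma rmodI: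
  assumes "\<forall>\<^sub>F e in at_right 0. norm (x e) \<le> inverse (\<rho> e ^ N)"
  shows "rmod \<rho> x"
  unfolding rmod_def using assms by blast

lemma req_refl:
  assumes "rho_gauge \<rho>"
  shows "req \<rho> x x"
  unfolding req_def rneg_def
proof
  fix q :: nat
  show "\<forall>\<^sub>F e in at_right 0. norm (x e - x e) \<le> \<rho> e ^ q"
    using rho_gauge_eventually_small[OF assms] by eventually_elim simp
qed

lemma strong_eq_refl:
  assumes "rho_gauge \<rho>"
  shows "strong_eq \<rho> a a"
  unfolding strong_eq_def
proof (intro allI)
  fix q r :: nat
  show "\<forall>\<^sub>F e in at_right 0. \<forall>n. cmod (a n e - a n e) \<le> \<rho> e ^ (n * q + r)"
    using rho_gauge_eventually_small[OF assms] by eventually_elim simp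
qed

lemma hypernat_const:
  assumes "rho_gauge \<rho>"
  shows "hypernat \<rho> (\<lambda>e. M)"
  unfolding hypernat_def
proof (rule rmodI)
  show "\<forall>\<^sub>F e in at_right 0. norm (real M) \<le> inverse (\<rho> e ^ M)"
    using rho_gauge_eventually_small[OF assms]
  proof eventually_elim
    case (elim e)
    have "real M * \<rho> e ^ M \<le> real (Suc M) * \<rho> e ^ M"
      using elim by (intro mult_right_mono) auto
    also have "\<dots> \<le> 1" using elim by (intro of_nat_Suc_mult_power_le_one) auto
    finally show ?case using elim by (simp add: field_simps)
  qed
qed

lemma rle_const_imp_eventually_le:
  assumes "rho_gauge \<rho>" and "rle \<rho> (\<lambda>e. real M) (\<lambda>e. real (N e))"
  shows "\<forall>\<^sub>F e in at_right 0. M \<le> N e"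
proof -
  obtain w where "rneg \<rho> w" and le: "\<forall>\<^sub>F e in at_right 0. real M \<le> real (N e) + w e"
    using assms(2) unfolding rle_def by blast
  then have "\<forall>\<^sub>F e in at_right 0. norm (w e) \<le> \<rho> e ^ 1"
    unfolding rneg_def by blast
  with le rho_gauge_eventually_small[OF assms(1)] show ?thesis
  proof eventually_elim
    case (elim e)
    then have "real M < real (N e) + 1" by auto
    then show ?case by linarith
  qed
qed

lemma rlt_imp_eventually_less:
  assumes "rho_gauge \<rho>" and "rlt \<rho> x y"
  shows "\<forall>\<^sub>F e in at_right 0. x e < y e"
proof -
  obtain m where "\<forall>\<^sub>F e in at_right 0. y e - x e > \<rho> e ^ m"
    using assms(2) unfolding rlt_def by blast
  with rho_gauge_eventually_small[OF assms(1)] show ?thesis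
  proof eventually_elim
    case (elim e)
    then have "0 < \<rho> e ^ m" by simp
    with elim show ?case by linarith
  qed
qed

lemma rlt_power_if_eventually_le:
  assumes "rho_gauge \<rho>" and "\<forall>\<^sub>F e in at_right 0. x e \<le> \<rho> e ^ Suc (Suc q)"
  shows "rlt \<rho> x (\<lambda>e. \<rho> e ^ q)"
  unfolding rlt_def
proof (intro exI[of _ "Suc q"])
  show "\<forall>\<^sub>F e in at_right 0. \<rho> e ^ q - x e > \<rho> e ^ Suc q"
    using assms(2) rho_gauge_eventually_small[OF assms(1)]
  proof eventually_elim
    case (elim e)
    then have "2 * \<rho> e ^ Suc (Suc q) \<le> \<rho> e ^ Suc q" "2 * \<rho> e ^ Suc q \<le> \<rho> e ^ q"
        "0 < \<rho> e ^ Suc q"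
      by (auto intro: two_mult_power_Suc_le simp del: power_Suc)
    with elim show ?case by linarith
  qed
qed

lemma hypersum_moderate_if_bounded:
  assumes "\<forall>\<^sub>F e in at_right 0. \<forall>N. norm (\<Sum>n\<le>N. b n e) \<le> inverse (\<rho> e ^ K)"
  shows "hypersum_moderate \<rho> b"
  unfolding hypersum_moderate_def hypersum_def rmod_def
  using assms by (auto elim!: eventually_mono)

lemma hyperlim_hypersum_if_geometric_tail:
  assumes \<rho>: "rho_gauge \<rho>"
    and tail: "\<forall>\<^sub>F e in at_right 0. \<forall>N.
      norm ((\<Sum>n. b n e) - (\<Sum>n\<le>N. b n e)) \<le> inverse (\<rho> e ^ R) * \<rho> e ^ N"
  shows "hyperlim \<rho> (hypersum b) (\<lambda>e. \<Sum>n. b n e)"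
  unfolding hyperlim_def
proof (intro allI exI conjI impI)
  fix q :: nat and N
  let ?M = "q + 2 + R"
  show "hypernat \<rho> (\<lambda>e. ?M)" by (rule hypernat_const[OF \<rho>])
  assume "hypernat \<rho> N \<and> rle \<rho> (\<lambda>e. real ?M) (\<lambda>e. real (N e))"
  then have "\<forall>\<^sub>F e in at_right 0. ?M \<le> N e"
    using rle_const_imp_eventually_le[OF \<rho>] by blast
  with tail rho_gauge_eventually_small[OF \<rho>]
  have "\<forall>\<^sub>F e in at_right 0. norm (hypersum b N e - (\<Sum>n. b n e)) \<le> \<rho> e ^ Suc (Suc q)"
  proof eventually_elim
    case (elim e)
    have "norm (hypersum b N e - (\<Sum>n. b n e)) \<le> inverse (\<rho> e ^ R) * \<rho> e ^ N e"
      using elim unfolding hypersum_def by (simp add: norm_minus_commute)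
    also have "\<dots> \<le> inverse (\<rho> e ^ R) * \<rho> e ^ ?M"
      using elim by (intro mult_left_mono power_decreasing) auto
    also have "\<dots> = \<rho> e ^ Suc (Suc q)"
      using elim by (simp add: power_add)
    finally show ?case .
  qed
  then show "rlt \<rho> (\<lambda>e. norm (hypersum b N e - (\<Sum>n. b n e))) (\<lambda>e. \<rho> e ^ q)"
    by (rule rlt_power_if_eventually_le[OF \<rho>])
qed

lemma rlt_ext_rad_if_small:
  assumes \<rho>: "rho_gauge \<rho>"
    and a: "\<forall>\<^sub>F e in at_right 0. \<forall>n. norm (a n e) \<le> inverse (\<rho> e ^ (n * Q + R))"
    and x: "\<forall>\<^sub>F e in at_right 0. x e < \<rho> e ^ Suc (Q + R)"
  shows "rlt_ext \<rho> x (rad a)"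
  unfolding rlt_ext_def
proof (intro exI)
  show "\<forall>\<^sub>F e in at_right 0. ereal (x e + \<rho> e ^ Suc (Q + R)) < rad a e"
    using a x rho_gauge_eventually_small[OF \<rho>]
  proof eventually_elim
    case (elim e)
    have "x e + \<rho> e ^ Suc (Q + R) < 2 * \<rho> e ^ Suc (Q + R)"
      using elim by simp
    also have "\<dots> \<le> \<rho> e ^ (Q + R)"
      using elim by (intro two_mult_power_Suc_le) auto
    finally have "ereal (x e + \<rho> e ^ Suc (Q + R)) < ereal (\<rho> e ^ (Q + R))" by simp
    also have "\<dots> \<le> rad a e"
      unfolding rad_def using elim by (intro inverse_limsup_root_ge) auto
    finally show ?case .
  qed
qed

lemma power_series_moderate:
  assumes \<rho>: "rho_gauge \<rho>"
    and a: "\<forall>\<^sub>F e in at_right 0. \<forall>n. cmod (a n e) \<le> inverse (\<rho> e ^ (n * Q + R))"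
    and x: "\<forall>\<^sub>F e in at_right 0. cmod (x e) \<le> \<rho> e ^ Suc Q"
  shows "hypersum_moderate \<rho> (\<lambda>n e. a n e * x e ^ n)"
    and "\<forall>\<^sub>F e in at_right 0. summable (\<lambda>n. a n e * x e ^ n)"
    and "rmod \<rho> (\<lambda>e. \<Sum>n. a n e * x e ^ n)"
    and "hyperlim \<rho> (hypersum (\<lambda>n e. a n e * x e ^ n)) (\<lambda>e. \<Sum>n. a n e * x e ^ n)"
proof -
  from a x rho_gauge_eventually_small[OF \<rho>]
  have bounds: "\<forall>\<^sub>F e in at_right 0. summable (\<lambda>n. a n e * x e ^ n) \<and>
      norm (\<Sum>n. a n e * x e ^ n) \<le> inverse (\<rho> e ^ Suc R) \<and>
      (\<forall>N. norm (\<Sum>n\<le>N. a n e * x e ^ n) \<le> inverse (\<rho> e ^ Suc R)) \<and>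
      (\<forall>N. norm ((\<Sum>n. a n e * x e ^ n) - (\<Sum>n\<le>N. a n e * x e ^ n))
             \<le> inverse (\<rho> e ^ R) * \<rho> e ^ N)"
  proof eventually_elim
    case (elim e)
    then have "0 < \<rho> e" "\<rho> e \<le> 1/2" "\<And>n. cmod (a n e) \<le> inverse (\<rho> e ^ (n * Q + R))"
      by auto
    from power_series_bounds[OF this elim(2)] show ?case by blast
  qed
  have "\<forall>\<^sub>F e in at_right 0. \<forall>N. norm (\<Sum>n\<le>N. a n e * x e ^ n) \<le> inverse (\<rho> e ^ Suc R)"
    using bounds by (rule eventually_mono) blast
  then show "hypersum_moderate \<rho> (\<lambda>n e. a n e * x e ^ n)"
    by (rule hypersum_moderate_if_bounded)
  show "\<forall>\<^sub>F e in at_right 0. summable (\<lambda>n. a n e * x e ^ n)"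
    using bounds by (rule eventually_mono) blast
  have "\<forall>\<^sub>F e in at_right 0. norm (\<Sum>n. a n e * x e ^ n) \<le> inverse (\<rho> e ^ Suc R)"
    using bounds by (rule eventually_mono) blast
  then show "rmod \<rho> (\<lambda>e. \<Sum>n. a n e * x e ^ n)"
    by (rule rmodI)
  have "\<forall>\<^sub>F e in at_right 0. \<forall>N.
      norm ((\<Sum>n. a n e * x e ^ n) - (\<Sum>n\<le>N. a n e * x e ^ n)) \<le> inverse (\<rho> e ^ R) * \<rho> e ^ N"
    using bounds by (rule eventually_mono) blast
  then show "hyperlim \<rho> (hypersum (\<lambda>n e. a n e * x e ^ n)) (\<lambda>e. \<Sum>n. a n e * x e ^ n)"
    by (rule hyperlim_hypersum_if_geometric_tail[OF \<rho>])
qed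

lemma deriv_power_series_moderate:
  assumes \<rho>: "rho_gauge \<rho>"
    and a: "\<forall>\<^sub>F e in at_right 0. \<forall>n. cmod (a n e) \<le> inverse (\<rho> e ^ (n * Q + R))"
    and x: "\<forall>\<^sub>F e in at_right 0. cmod (x e) \<le> \<rho> e ^ (Q + 2)"
  shows "\<forall>\<^sub>F e in at_right 0. summable (\<lambda>n. of_nat (Suc n) * a (Suc n) e * x e ^ n)"
    and "rmod \<rho> (\<lambda>e. \<Sum>n. of_nat (Suc n) * a (Suc n) e * x e ^ n)"
proof -
  from a x rho_gauge_eventually_small[OF \<rho>]
  have bounds: "\<forall>\<^sub>F e in at_right 0. summable (\<lambda>n. of_nat (Suc n) * a (Suc n) e * x e ^ n) \<and>
      norm (\<Sum>n. of_nat (Suc n) * a (Suc n) e * x e ^ n) \<le> inverse (\<rho> e ^ Suc (Q + R))"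
  proof eventually_elim
    case (elim e)
    then have "0 < \<rho> e" "\<rho> e \<le> 1/2" "\<And>n. cmod (a n e) \<le> inverse (\<rho> e ^ (n * Q + R))"
      by auto
    from deriv_power_series_bounds[OF this elim(2)] show ?case by blast
  qed
  then show "\<forall>\<^sub>F e in at_right 0. summable (\<lambda>n. of_nat (Suc n) * a (Suc n) e * x e ^ n)"
    by (rule eventually_mono) blast
  have "\<forall>\<^sub>F e in at_right 0.
      norm (\<Sum>n. of_nat (Suc n) * a (Suc n) e * x e ^ n) \<le> inverse (\<rho> e ^ Suc (Q + R))"
    using bounds by (rule eventually_mono) blast
  then show "rmod \<rho> (\<lambda>e. \<Sum>n. of_nat (Suc n) * a (Suc n) e * x e ^ n)"
    by (rule rmodI)
qed

lemma mem_conv_setI: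
  assumes \<rho>: "rho_gauge \<rho>" and "weakly_moderate \<rho> a" and "rmod \<rho> z" and "rmod \<rho> c"
    and "rlt_ext \<rho> (\<lambda>e. cmod (z e - c e)) (rad a)"
    and "hypersum_moderate \<rho> (\<lambda>n e. a n e * (z e - c e) ^ n)"
    and "\<forall>\<^sub>F e in at_right 0. summable (\<lambda>n. a n e * (z e - c e) ^ n)"
    and "rmod \<rho> (\<lambda>e. \<Sum>n. a n e * (z e - c e) ^ n)"
    and "hyperlim \<rho> (hypersum (\<lambda>n e. a n e * (z e - c e) ^ n)) (\<lambda>e. \<Sum>n. a n e * (z e - c e) ^ n)"
    and "\<And>zh. req \<rho> zh z \<Longrightarrow>
      (\<forall>\<^sub>F e in at_right 0. summable (\<lambda>n. of_nat (Suc n) * a (Suc n) e * (zh e - c e) ^ n)) \<and>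
      rmod \<rho> (\<lambda>e. \<Sum>n. of_nat (Suc n) * a (Suc n) e * (zh e - c e) ^ n)"
  shows "z \<in> conv_set \<rho> a c"
  unfolding conv_set_def
  using assms req_refl[OF \<rho>] strong_eq_refl[OF \<rho>] by blast

lemma mem_conv_set_if_close:
  assumes \<rho>: "rho_gauge \<rho>" and "weakly_moderate \<rho> a"
    and a: "\<forall>\<^sub>F e in at_right 0. \<forall>n. cmod (a n e) \<le> inverse (\<rho> e ^ (n * Q + R))"
    and "rmod \<rho> z" and "rmod \<rho> c"
    and close: "\<forall>\<^sub>F e in at_right 0. cmod (z e - c e) < \<rho> e ^ (Q + R + 3)"
  shows "z \<in> conv_set \<rho> a c"
proof -
  note small = rho_gauge_eventually_small[OF \<rho>]
  have close_power: "\<forall>\<^sub>F e in at_right 0. cmod (z e - c e) < \<rho> e ^ k" if "k \<le> Q + R + 3" for k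
    using close small
  proof eventually_elim
    case (elim e)
    have "\<rho> e ^ (Q + R + 3) \<le> \<rho> e ^ k" using elim that by (intro power_decreasing) auto
    with elim show ?case by linarith
  qed
  have close_QR: "\<forall>\<^sub>F e in at_right 0. cmod (z e - c e) < \<rho> e ^ Suc (Q + R)"
    by (rule close_power) simp
  have "\<forall>\<^sub>F e in at_right 0. cmod (z e - c e) < \<rho> e ^ Suc Q"
    by (rule close_power) simp
  then have close_Q: "\<forall>\<^sub>F e in at_right 0. cmod (z e - c e) \<le> \<rho> e ^ Suc Q"
    by (rule eventually_mono) simp
  have deriv_close: "\<forall>\<^sub>F e in at_right 0. cmod (zh e - c e) \<le> \<rho> e ^ (Q + 2)"
    if "req \<rho> zh z" for zh
  proof -
    have "\<forall>\<^sub>F e in at_right 0. cmod (zh e - z e) \<le> \<rho> e ^ (Q + R + 3)"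
      using that unfolding req_def rneg_def by blast
    with close small show ?thesis
    proof eventually_elim
      case (elim e)
      have "cmod (zh e - c e) \<le> cmod (zh e - z e) + cmod (z e - c e)"
        using norm_triangle_ineq[of "zh e - z e" "z e - c e"] by simp
      also have "\<dots> \<le> 2 * \<rho> e ^ Suc (Q + R + 2)"
        using elim by (simp add: numeral_3_eq_3 numeral_2_eq_2)
      also have "\<dots> \<le> \<rho> e ^ (Q + R + 2)" using elim by (intro two_mult_power_Suc_le) auto
      also have "\<dots> \<le> \<rho> e ^ (Q + 2)" using elim by (intro power_decreasing) auto
      finally show ?case .
    qed
  qed
  note series = power_series_moderate[OF \<rho> a close_Q]
  show ?thesis
  proof (rule mem_conv_setI[OF \<rho> assms(2,4,5) _ series])
    show "rlt_ext \<rho> (\<lambda>e. cmod (z e - c e)) (rad a)"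
      by (rule rlt_ext_rad_if_small[OF \<rho> a close_QR])
    show "(\<forall>\<^sub>F e in at_right 0. summable (\<lambda>n. of_nat (Suc n) * a (Suc n) e * (zh e - c e) ^ n)) \<and>
      rmod \<rho> (\<lambda>e. \<Sum>n. of_nat (Suc n) * a (Suc n) e * (zh e - c e) ^ n)"
      if "req \<rho> zh z" for zh
      using deriv_power_series_moderate[OF \<rho> a deriv_close[OF that]] by blast
  qed
qed

theorem theorem2p26:
  fixes \<rho> :: "real \<Rightarrow> real"
    and a :: "nat \<Rightarrow> real \<Rightarrow> complex"
    and c :: "real \<Rightarrow> complex"
  assumes "rho_gauge \<rho>"
    and "weakly_moderate \<rho> a"
    and "rmod \<rho> c"
  shows "\<exists>q::nat. sball \<rho> (\<lambda>e. \<rho> e ^ q) c \<subseteq> conv_set \<rho> a c"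
proof -
  obtain Q R :: nat
    where a: "\<forall>\<^sub>F e in at_right 0. \<forall>n. cmod (a n e) \<le> inverse (\<rho> e ^ (n * Q + R))"
    using assms(2) unfolding weakly_moderate_def by blast
  have "z \<in> conv_set \<rho> a c" if "z \<in> sball \<rho> (\<lambda>e. \<rho> e ^ (Q + R + 3)) c" for z
  proof (rule mem_conv_set_if_close[OF assms(1,2) a _ assms(3)])
    show "rmod \<rho> z" using that unfolding sball_def by blast
    have "rlt \<rho> (\<lambda>e. cmod (z e - c e)) (\<lambda>e. \<rho> e ^ (Q + R + 3))"
      using that unfolding sball_def by blast
    then show "\<forall>\<^sub>F e in at_right 0. cmod (z e - c e) < \<rho> e ^ (Q + R + 3)"
      by (rule rlt_imp_eventually_less[OF assms(1)])
  qed
  then show ?thesis by blast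
qed

end
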